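(* Let $\nu$ be a multiplicative function on $\mathbb{F}_q[T]$ such that for some non-negative integer $r$ we have $\nu(P^k)=O(k^r)$ for all primes $P$ and $k\ge1$ (implied constant independent of $P$), and such that for some $\eta>0$, $\nu(A)\ll_\eta|A|^\eta$ as $\deg A\to\infty$. Let $R\in\mathcal{M}$ be a variable, $a,b>0$ constants, and $X=X(R)$, $y=y(R)$ non-negative, increasing, integer-valued functions with $X\le a\log_q\log\deg R$ and $y\ge b\log_q\deg R$ for $\deg R$ large. Let $c,\epsilon$ satisfy $c>\epsilon>\max\{0,1-\frac1a\}$ and $c>\eta$, let $\delta>0$ be small, and let $S\in\mathcal{M}$ (possibly depending on $R$). Then, as $\deg R\to\infty$, $$\sum_{\substack{A\in\mathcal{S}_{\mathcal{M}}(X)\\ \deg A\le y\\ (A,S)=1}}\frac{\nu(A)}{|A|^c} = \prod_{\substack{\deg P\le X\\ (P,S)=1}}\Big(1+\frac{\nu(P)}{|P|^c}+\frac{\nu(P^2)}{|P|^{2c}}+\cdots\Big) + O_{q,a,b,c,r,\epsilon,\delta}\Big((\deg R)^{-b(c-\epsilon)(1-\delta)}\Big).$$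
   Context: $q$ prime power, $\mathcal{M}$ the monic polynomials of $\mathbb{F}_q[T]$, $P$ denotes monic irreducibles, $|A|=q^{\deg A}$, $\mathcal{S}_{\mathcal{M}}(X)=\{A\in\mathcal{M}: P\mid A\Rightarrow\deg P\le X\}$. *)

theory Defs
  imports "HOL-Analysis.Analysis" "HOL-Computational_Algebra.Polynomial_Factorial"
begin

definition monic_poly :: "'a::field poly \<Rightarrow> bool" where
  "monic_poly A \<longleftrightarrow> lead_coeff A = 1"

definition monic_irred :: "'a::field poly \<Rightarrow> bool" where
  "monic_irred P \<longleftrightarrow> monic_poly P \<and> irreducible P"

definition absq :: "'a::{finite,field} poly \<Rightarrow> real" where
  "absq A = real CARD('a) ^ degree A"

definition smooth_monic :: "nat \<Rightarrow> 'a::field poly \<Rightarrow> bool" where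
  "smooth_monic X A \<longleftrightarrow> monic_poly A \<and>
     (\<forall>P. monic_irred P \<and> P dvd A \<longrightarrow> degree P \<le> X)"

definition multiplicative_poly :: "('a::field poly \<Rightarrow> complex) \<Rightarrow> bool" where
  "multiplicative_poly \<nu> \<longleftrightarrow> \<nu> 1 = 1 \<and>
     (\<forall>A B. monic_poly A \<longrightarrow> monic_poly B \<longrightarrow> coprime A B \<longrightarrow> \<nu> (A * B) = \<nu> A * \<nu> B)"

end

theory Submission
  imports Defs "HOL-Real_Asymp.Real_Asymp"
begin

(*
  Every A counted on the left factors uniquely as a product of powers of the finitely many
  primes P with deg P <= X and (P, S) = 1.  Writing f P k = nu(P^k) / |P|^(kc), the sum is
  therefore the part of degree <= y of the expansion of the finite Euler product
  prod_P sum_k f P k, which converges absolutely.  Rankin's trick bounds the omitted part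
  (deg A > y) by q^(-(c - eps) y) prod_P sum_k |nu(P^k)| |P|^(-k eps), and since
  nu(P^k) = O(k^r) each factor is 1 + O(|P|^(-eps)).  Hence the product is at most
  exp(O(sum_{deg P <= X} |P|^(-eps))) = exp(O((X + 1) q^(X max(0, 1 - eps)))), which is
  (deg R)^o(1) because X <= a log_q log deg R and a max(0, 1 - eps) < 1; meanwhile
  q^(-(c - eps) y) <= (deg R)^(-b (c - eps)).
*)

section \<open>Factorization into monic irreducibles\<close>

lemma monic_poly_nonzero: "monic_poly A \<Longrightarrow> A \<noteq> 0"
  by (auto simp: monic_poly_def)

lemma monic_irred_nonzero: "monic_irred P \<Longrightarrow> P \<noteq> 0"
  by (simp add: monic_irred_def monic_poly_nonzero)

lemma monic_irred_not_unit: "monic_irred P \<Longrightarrow> \<not> is_unit P"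
  by (simp add: monic_irred_def irreducible_not_unit)

lemma monic_irred_imp_prime_elem: "monic_irred P \<Longrightarrow> prime_elem (P :: 'a::field poly)"
  by (simp add: monic_irred_def field_poly_irreducible_imp_prime)

lemma monic_irred_degree_pos: "monic_irred (P :: 'a::field poly) \<Longrightarrow> 0 < degree P"
  using monic_irred_nonzero monic_irred_not_unit is_unit_iff_degree by blast

lemma monic_irred_dvd_imp_eq:
  fixes P R :: "'a::field poly"
  assumes P: "monic_irred P" and R: "monic_irred R" and "R dvd P"
  shows "R = P"
proof -
  obtain m where m: "P = R * m" using \<open>R dvd P\<close> by blast
  have "is_unit m"
    using P R m irreducibleD[of P R m] by (auto simp: monic_irred_def irreducible_not_unit)
  then have "degree m = 0" by (metis is_unit_iff_degree not_is_unit_0)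
  moreover have "lead_coeff m = 1"
    using P R by (simp add: m lead_coeff_mult monic_irred_def monic_poly_def)
  ultimately have "m = 1" by (metis degree_0_id one_pCons)
  then show ?thesis using m by simp
qed

lemma exists_monic_irred_dvd:
  fixes A :: "'a::field poly"
  shows "0 < degree A \<Longrightarrow> \<exists>P. monic_irred P \<and> P dvd A"
proof (induction "degree A" arbitrary: A rule: less_induct)
  case less
  have "A \<noteq> 0" using less.prems by auto
  then have A: "A \<noteq> 0" "\<not> is_unit A" using less.prems by (auto simp: is_unit_iff_degree)
  show ?case
  proof (cases "irreducible A")
    case True
    define P where "P = smult (inverse (lead_coeff A)) A"
    have unit: "is_unit [:inverse (lead_coeff A):]" using A by (simp add: is_unit_pCons_iff)
    have "irreducible P"
      using True irreducible_mult_unit_left[OF unit] by (simp add: P_def)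
    moreover have "lead_coeff P = 1" using A by (simp add: P_def)
    moreover have "A = P * [:lead_coeff A:]" using A by (simp add: P_def)
    ultimately show ?thesis by (metis dvd_triv_left monic_irred_def monic_poly_def)
  next
    case False
    then obtain B C where BC: "A = B * C" "\<not> is_unit B" "\<not> is_unit C"
      using A unfolding irreducible_def by blast
    then have "B \<noteq> 0" "C \<noteq> 0" using A by auto
    then have "0 < degree B" "degree B < degree A"
      using BC by (auto simp: is_unit_iff_degree degree_mult_eq)
    then obtain P where "monic_irred P" "P dvd B" using less.hyps by blast
    then show ?thesis using BC by auto
  qed
qed

lemma coprime_iff_monic_irred_dvd:
  fixes A S :: "'a::field poly"
  assumes "A \<noteq> 0"
  shows "coprime A S \<longleftrightarrow> (\<forall>P. monic_irred P \<longrightarrow> P dvd A \<longrightarrow> \<not> P dvd S)"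
proof
  assume "coprime A S"
  then show "\<forall>P. monic_irred P \<longrightarrow> P dvd A \<longrightarrow> \<not> P dvd S"
    using coprime_common_divisor monic_irred_not_unit by blast
next
  assume no_common: "\<forall>P. monic_irred P \<longrightarrow> P dvd A \<longrightarrow> \<not> P dvd S"
  show "coprime A S"
  proof (rule coprimeI, rule ccontr)
    fix D assume D: "D dvd A" "D dvd S" "\<not> is_unit D"
    then have "0 < degree D" using assms by (auto simp: is_unit_iff_degree)
    then obtain P where "monic_irred P" "P dvd D" using exists_monic_irred_dvd by blast
    then show False using no_common D by (meson dvd_trans)
  qed
qed

lemma coprime_monic_irred_iff:
  fixes P S :: "'a::field poly"
  assumes "monic_irred P"
  shows "coprime P S \<longleftrightarrow> \<not> P dvd S"
proof
  assume "coprime P S"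
  then show "\<not> P dvd S" using coprime_common_divisor[of P S P] assms monic_irred_not_unit by auto
next
  assume "\<not> P dvd S"
  then show "coprime P S"
    unfolding coprime_iff_monic_irred_dvd[OF monic_irred_nonzero[OF assms]]
    using monic_irred_dvd_imp_eq[OF assms] by blast
qed

definition prod_powers :: "'a set \<Rightarrow> ('a \<Rightarrow> nat) \<Rightarrow> 'a::comm_monoid_mult" where
  "prod_powers Q e = (\<Prod>P\<in>Q. P ^ e P)"

lemma prod_powers_remove:
  "finite Q \<Longrightarrow> P \<in> Q \<Longrightarrow> prod_powers Q e = P ^ e P * prod_powers (Q - {P}) e"
  by (simp add: prod_powers_def prod.remove)

lemma prod_powers_cong:
  "(\<And>P. P \<in> Q \<Longrightarrow> e P = e' P) \<Longrightarrow> prod_powers Q e = prod_powers Q e'"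
  by (simp add: prod_powers_def)

lemma prod_powers_update_Suc:
  assumes "finite Q" "P \<in> Q"
  shows "prod_powers Q (e(P := Suc (e P))) = P * prod_powers Q e"
proof -
  have "prod_powers (Q - {P}) (e(P := Suc (e P))) = prod_powers (Q - {P}) e"
    by (rule prod_powers_cong) simp
  then show ?thesis
    using prod_powers_remove[OF assms, of e] prod_powers_remove[OF assms, of "e(P := Suc (e P))"]
    by (simp add: mult.assoc)
qed

lemma monic_prod_powers:
  "(\<And>P. P \<in> Q \<Longrightarrow> monic_poly P) \<Longrightarrow> monic_poly (prod_powers Q e)"
  by (simp add: prod_powers_def monic_poly_def lead_coeff_prod lead_coeff_power)

lemma degree_prod_powers:
  fixes Q :: "'a::field poly set"
  assumes "\<And>P. P \<in> Q \<Longrightarrow> monic_poly P"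
  shows "degree (prod_powers Q e) = (\<Sum>P\<in>Q. e P * degree P)"
  unfolding prod_powers_def using assms
  by (subst degree_prod_eq_sum_degree) (auto simp: degree_power_eq monic_poly_nonzero)

lemma monic_irred_dvd_prod_powers_imp_mem:
  fixes Q :: "'a::field poly set"
  assumes "finite Q" "\<And>P. P \<in> Q \<Longrightarrow> monic_irred P"
    and "monic_irred R" "R dvd prod_powers Q e"
  shows "R \<in> Q"
  using assms
proof (induction Q rule: finite_induct)
  case empty
  then show ?case by (simp add: prod_powers_def monic_irred_not_unit)
next
  case (insert P Q)
  have "prod_powers (insert P Q) e = P ^ e P * prod_powers Q e"
    using insert.hyps by (simp add: prod_powers_def)
  then have "R dvd P ^ e P \<or> R dvd prod_powers Q e"
    using insert.prems by (simp add: prime_elem_dvd_mult_iff monic_irred_imp_prime_elem)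
  then show ?case
  proof
    assume "R dvd P ^ e P"
    then have "R dvd P" using insert.prems monic_irred_imp_prime_elem prime_elem_dvd_power by blast
    then show ?thesis using insert.prems monic_irred_dvd_imp_eq by blast
  qed (use insert in auto)
qed

lemma power_dvd_prod_powers_imp_le:
  fixes Q :: "'a::field poly set"
  assumes Q: "finite Q" "\<And>P. P \<in> Q \<Longrightarrow> monic_irred P"
    and P: "P \<in> Q" and dvd: "P ^ k dvd prod_powers Q e"
  shows "k \<le> e P"
proof (rule ccontr)
  assume "\<not> k \<le> e P"
  then have "P ^ Suc (e P) dvd P ^ k"
    by (intro le_imp_power_dvd) simp
  then have "P ^ Suc (e P) dvd prod_powers Q e"
    using dvd by (rule dvd_trans)
  then have "P ^ e P * P dvd P ^ e P * prod_powers (Q - {P}) e"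
    by (simp only: prod_powers_remove[OF Q(1) P, symmetric] power_Suc2[symmetric])
  then have "P dvd prod_powers (Q - {P}) e"
    using monic_irred_nonzero[OF Q(2)[OF P]] by (simp add: dvd_mult_cancel_left)
  then have "P \<in> Q - {P}"
    using Q P by (intro monic_irred_dvd_prod_powers_imp_mem) auto
  then show False by simp
qed

lemma inj_on_prod_powers:
  fixes Q :: "'a::field poly set"
  assumes "finite Q" "\<And>P. P \<in> Q \<Longrightarrow> monic_irred P"
  shows "inj_on (prod_powers Q) (Q \<rightarrow>\<^sub>E UNIV)"
proof (rule inj_onI)
  fix e e' assume e: "e \<in> Q \<rightarrow>\<^sub>E UNIV" "e' \<in> Q \<rightarrow>\<^sub>E UNIV"
    and eq: "prod_powers Q e = prod_powers Q e'"
  have own_power: "P ^ d P dvd prod_powers Q d" if "P \<in> Q" for P d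
    using prod_powers_remove[OF assms(1) that] by simp
  show "e = e'"
  proof (rule PiE_ext[OF e])
    fix P assume P: "P \<in> Q"
    show "e P = e' P"
      using own_power[OF P, of e] own_power[OF P, of e'] eq
        power_dvd_prod_powers_imp_le[OF assms P] by (metis le_antisym)
  qed
qed

lemma multiplicative_poly_prod_powers:
  fixes Q :: "'a::field poly set"
  assumes mult: "multiplicative_poly \<nu>"
    and "finite Q" "\<And>P. P \<in> Q \<Longrightarrow> monic_irred P"
  shows "\<nu> (prod_powers Q e) = (\<Prod>P\<in>Q. \<nu> (P ^ e P))"
  using assms(2,3)
proof (induction Q rule: finite_induct)
  case empty
  then show ?case using mult by (simp add: prod_powers_def multiplicative_poly_def)
next
  case (insert P Q)
  have P: "monic_irred P" using insert.prems by simp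
  have "\<not> P dvd prod_powers Q e"
    using insert monic_irred_dvd_prod_powers_imp_mem by blast
  then have "coprime (P ^ e P) (prod_powers Q e)"
    unfolding coprime_iff_monic_irred_dvd[OF power_not_zero[OF monic_irred_nonzero[OF P]]]
    using P monic_irred_dvd_imp_eq monic_irred_imp_prime_elem prime_elem_dvd_power by blast
  moreover have "monic_poly (P ^ e P)"
    using P by (simp add: monic_irred_def monic_poly_def lead_coeff_power)
  moreover have "monic_poly (prod_powers Q e)"
    by (rule monic_prod_powers) (use insert.prems in \<open>simp add: monic_irred_def\<close>)
  ultimately have "\<nu> (P ^ e P * prod_powers Q e) = \<nu> (P ^ e P) * \<nu> (prod_powers Q e)"
    using mult by (simp add: multiplicative_poly_def)
  then show ?case
    using insert by (simp add: prod_powers_def)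
qed

lemma monic_eq_prod_powers:
  fixes Q :: "'a::field poly set"
  assumes Q: "finite Q" "\<And>P. P \<in> Q \<Longrightarrow> monic_irred P"
  shows "monic_poly A \<Longrightarrow> (\<And>P. monic_irred P \<Longrightarrow> P dvd A \<Longrightarrow> P \<in> Q) \<Longrightarrow>
    \<exists>e\<in>Q \<rightarrow>\<^sub>E UNIV. A = prod_powers Q e"
proof (induction "degree A" arbitrary: A rule: less_induct)
  case less
  show ?case
  proof (cases "degree A = 0")
    case True
    then have "A = [:lead_coeff A:]" by (metis degree_0_id)
    then have "A = 1"
      using less.prems(1) by (simp add: monic_poly_def one_pCons)
    then have "A = prod_powers Q (\<lambda>_\<in>Q. 0)"
      by (simp add: prod_powers_def)
    moreover have "(\<lambda>_\<in>Q. 0) \<in> Q \<rightarrow>\<^sub>E UNIV" by simp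
    ultimately show ?thesis by blast
  next
    case False
    then obtain P where P: "monic_irred P" "P dvd A" using exists_monic_irred_dvd by blast
    then have "P \<in> Q" using less.prems(2) by blast
    obtain B where B: "A = P * B" using P(2) by blast
    have "A \<noteq> 0" using less.prems(1) by (rule monic_poly_nonzero)
    then have "P \<noteq> 0" "B \<noteq> 0" using B by auto
    then have "degree A = degree P + degree B" by (simp add: B degree_mult_eq)
    then have smaller: "degree B < degree A" using monic_irred_degree_pos[OF P(1)] by simp
    have monic: "monic_poly B"
      using P(1) less.prems(1) by (simp add: B monic_poly_def monic_irred_def lead_coeff_mult)
    have factors: "R \<in> Q" if "monic_irred R" "R dvd B" for R
      using less.prems(2) that by (simp add: B)
    obtain e where e: "e \<in> Q \<rightarrow>\<^sub>E UNIV" "B = prod_powers Q e"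
      using less.hyps[OF smaller monic factors] by blast
    have "e(P := Suc (e P)) \<in> Q \<rightarrow>\<^sub>E UNIV"
      using e(1) \<open>P \<in> Q\<close> by (auto simp: PiE_def extensional_def)
    moreover have "A = prod_powers Q (e(P := Suc (e P)))"
      using prod_powers_update_Suc[OF Q(1) \<open>P \<in> Q\<close>] by (simp add: B e(2))
    ultimately show ?thesis by blast
  qed
qed

lemma bij_betw_prod_powers:
  fixes Q :: "'a::field poly set"
  assumes "finite Q" "\<And>P. P \<in> Q \<Longrightarrow> monic_irred P"
  shows "bij_betw (prod_powers Q) (Q \<rightarrow>\<^sub>E UNIV)
    {A. monic_poly A \<and> (\<forall>P. monic_irred P \<longrightarrow> P dvd A \<longrightarrow> P \<in> Q)}"
proof (rule bij_betw_imageI)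
  show "inj_on (prod_powers Q) (Q \<rightarrow>\<^sub>E UNIV)"
    using assms by (rule inj_on_prod_powers)
  show "prod_powers Q ` (Q \<rightarrow>\<^sub>E UNIV)
    = {A. monic_poly A \<and> (\<forall>P. monic_irred P \<longrightarrow> P dvd A \<longrightarrow> P \<in> Q)}"
  proof (intro equalityI subsetI)
    fix A assume "A \<in> prod_powers Q ` (Q \<rightarrow>\<^sub>E UNIV)"
    then obtain e where A: "A = prod_powers Q e" by blast
    have "monic_poly A"
      using assms(2) by (simp add: A monic_prod_powers monic_irred_def)
    moreover have "P \<in> Q" if "monic_irred P" "P dvd A" for P
      using monic_irred_dvd_prod_powers_imp_mem[OF assms that(1)] that(2) by (simp add: A)
    ultimately show "A \<in> {A. monic_poly A \<and> (\<forall>P. monic_irred P \<longrightarrow> P dvd A \<longrightarrow> P \<in> Q)}"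
      by blast
  next
    fix A assume "A \<in> {A. monic_poly A \<and> (\<forall>P. monic_irred P \<longrightarrow> P dvd A \<longrightarrow> P \<in> Q)}"
    then obtain e where "e \<in> Q \<rightarrow>\<^sub>E UNIV" "A = prod_powers Q e"
      using monic_eq_prod_powers[OF assms, of A] by auto
    then show "A \<in> prod_powers Q ` (Q \<rightarrow>\<^sub>E UNIV)" by blast
  qed
qed

lemma smooth_coprime_eq_monic_irred_dvd_imp_mem:
  fixes S :: "'a::field poly"
  shows "{A. smooth_monic X A \<and> coprime A S} = {A. monic_poly A \<and>
    (\<forall>P. monic_irred P \<longrightarrow> P dvd A \<longrightarrow> P \<in> {P. monic_irred P \<and> degree P \<le> X \<and> coprime P S})}"
proof -
  have "coprime A S \<longleftrightarrow> (\<forall>P. monic_irred P \<longrightarrow> P dvd A \<longrightarrow> coprime P S)" if "monic_poly A" for A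
    using coprime_iff_monic_irred_dvd[OF monic_poly_nonzero[OF that]]
    by (simp add: coprime_monic_irred_iff)
  then show ?thesis by (auto simp: smooth_monic_def)
qed

section \<open>Norms and counting\<close>

lemma card_field_ge_2: "2 \<le> CARD('a::{finite,field})"
proof -
  have "card {0::'a, 1} \<le> CARD('a)" by (rule card_mono) auto
  then show ?thesis by simp
qed

lemma absq_powr:
  "absq (A :: 'a::{finite,field} poly) powr t = real CARD('a) powr (real (degree A) * t)"
  using card_field_ge_2[where 'a='a] by (simp add: absq_def powr_powr flip: powr_realpow)

lemma absq_pos: "0 < absq (A :: 'a::{finite,field} poly)"
  using card_field_ge_2[where 'a='a] by (simp add: absq_def)

lemma finite_degree_le: "finite {p :: 'a::{finite,zero} poly. degree p \<le> n}"
proof (rule finite_imageD)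
  have "(\<lambda>p. restrict (coeff p) {..n}) ` {p :: 'a poly. degree p \<le> n} \<subseteq> {..n} \<rightarrow>\<^sub>E UNIV"
    by (intro image_subsetI) simp
  then show "finite ((\<lambda>p. restrict (coeff p) {..n}) ` {p :: 'a poly. degree p \<le> n})"
    by (rule finite_subset) (simp add: finite_PiE)
  show "inj_on (\<lambda>p. restrict (coeff p) {..n}) {p :: 'a poly. degree p \<le> n}"
  proof (rule inj_onI, rule poly_eqI)
    fix p q :: "'a poly" and i
    assume "p \<in> {p. degree p \<le> n}" "q \<in> {p. degree p \<le> n}"
      and "restrict (coeff p) {..n} = restrict (coeff q) {..n}"
    then show "coeff p i = coeff q i"
      by (cases "i \<le> n") (auto simp: coeff_eq_0 dest: fun_cong[of _ _ i])
  qed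
qed

lemma card_monic_degree_eq_le:
  "card {p :: 'a::{finite,field} poly. monic_poly p \<and> degree p = n} \<le> CARD('a) ^ n"
proof -
  let ?M = "{p :: 'a poly. monic_poly p \<and> degree p = n}"
  let ?low = "\<lambda>p. restrict (coeff p) {..<n}"
  have "inj_on ?low ?M"
  proof (rule inj_onI, rule poly_eqI)
    fix p q :: "'a poly" and i
    assume "p \<in> ?M" "q \<in> ?M" and "?low p = ?low q"
    then show "coeff p i = coeff q i"
      by (cases i n rule: linorder_cases)
        (auto simp: monic_poly_def coeff_eq_0 dest: fun_cong[of _ _ i])
  qed
  then have "card ?M = card (?low ` ?M)" by (simp add: card_image)
  also have "?low ` ?M \<subseteq> {..<n} \<rightarrow>\<^sub>E UNIV"
    by (intro image_subsetI) simp
  then have "card (?low ` ?M) \<le> card ({..<n} \<rightarrow>\<^sub>E (UNIV :: 'a set))"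
    by (rule card_mono[rotated]) (simp add: finite_PiE)
  also have "\<dots> = CARD('a) ^ n" by (simp add: card_PiE)
  finally show ?thesis .
qed

lemma sum_powr_degree_le:
  fixes Q :: "'a::{finite,field} poly set" and \<epsilon> :: real
  assumes Q: "\<And>P. P \<in> Q \<Longrightarrow> monic_poly P \<and> degree P \<le> X"
  defines "q \<equiv> real CARD('a)"
  shows "(\<Sum>P\<in>Q. (q powr - \<epsilon>) ^ degree P) \<le> real (X + 1) * q powr (real X * max 0 (1 - \<epsilon>))"
proof -
  have q: "1 < q" using card_field_ge_2[where 'a='a] by (simp add: q_def)
  have "finite Q"
    by (rule finite_subset[OF _ finite_degree_le[of X]]) (use Q in auto)
  then have "(\<Sum>P\<in>Q. (q powr - \<epsilon>) ^ degree P)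
      = (\<Sum>n\<le>X. \<Sum>P | P \<in> Q \<and> degree P = n. (q powr - \<epsilon>) ^ degree P)"
    by (intro sum.group[symmetric]) (use Q in auto)
  also have "\<dots> = (\<Sum>n\<le>X. real (card {P\<in>Q. degree P = n}) * (q powr - \<epsilon>) ^ n)"
    by (intro sum.cong refl) simp
  also have "\<dots> \<le> (\<Sum>n\<le>X. q powr (real X * max 0 (1 - \<epsilon>)))"
  proof (rule sum_mono)
    fix n assume n: "n \<in> {..X}"
    have "card {P\<in>Q. degree P = n} \<le> card {P :: 'a poly. monic_poly P \<and> degree P = n}"
      by (rule card_mono[OF finite_subset[OF _ finite_degree_le[of n]]]) (use Q in auto)
    also have "\<dots> \<le> CARD('a) ^ n" by (rule card_monic_degree_eq_le)
    finally have "real (card {P\<in>Q. degree P = n}) \<le> q ^ n"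
      unfolding q_def by (metis of_nat_le_iff of_nat_power)
    then have "real (card {P\<in>Q. degree P = n}) * (q powr - \<epsilon>) ^ n \<le> q ^ n * (q powr - \<epsilon>) ^ n"
      by (rule mult_right_mono) simp
    also have "\<dots> = q powr (real n * (1 - \<epsilon>))"
    proof -
      have "q ^ n = q powr real n" using q by (simp add: powr_realpow)
      moreover have "(q powr - \<epsilon>) ^ n = q powr (real n * - \<epsilon>)" using q by (simp add: powr_power)
      ultimately show ?thesis by (simp add: powr_add[symmetric] algebra_simps)
    qed
    also have "\<dots> \<le> q powr (real X * max 0 (1 - \<epsilon>))"
    proof (rule powr_mono)
      have "real n * (1 - \<epsilon>) \<le> real n * max 0 (1 - \<epsilon>)" by (intro mult_left_mono) auto
      also have "\<dots> \<le> real X * max 0 (1 - \<epsilon>)" using n by (intro mult_right_mono) auto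
      finally show "real n * (1 - \<epsilon>) \<le> real X * max 0 (1 - \<epsilon>)" .
    qed (use q in auto)
    finally show "real (card {P\<in>Q. degree P = n}) * (q powr - \<epsilon>) ^ n
        \<le> q powr (real X * max 0 (1 - \<epsilon>))" .
  qed
  also have "\<dots> = real (X + 1) * q powr (real X * max 0 (1 - \<epsilon>))" by simp
  finally show ?thesis .
qed

section \<open>Rankin's trick for finite Euler products\<close>

lemma summable_Suc_power_mult_geometric:
  fixes x :: real
  assumes "0 \<le> x" "x < 1"
  shows "summable (\<lambda>k. real (Suc k) ^ r * x ^ k)"
proof (cases "x = 0")
  case True
  then show ?thesis by (intro summable_finite[of "{0}"]) auto
next
  case False
  define w where "w = sqrt x"
  have w: "0 < w" "w < 1" using assms False by (auto simp: w_def real_sqrt_lt_1_iff)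
  have x: "x = w * w" using assms by (simp add: w_def)
  have "((\<lambda>k. real (Suc k) ^ r * w ^ k) \<longlongrightarrow> 0) at_top"
    using w by real_asymp
  then have "eventually (\<lambda>k. real (Suc k) ^ r * w ^ k < 1) at_top"
    by (rule order_tendstoD) simp
  then have "eventually (\<lambda>k. norm (real (Suc k) ^ r * x ^ k) \<le> w ^ k) at_top"
  proof eventually_elim
    case (elim k)
    have "norm (real (Suc k) ^ r * x ^ k) = (real (Suc k) ^ r * w ^ k) * w ^ k"
      using w by (simp add: x power_mult_distrib)
    also have "\<dots> \<le> w ^ k" using elim w by (intro mult_left_le_one_le) auto
    finally show ?case .
  qed
  moreover have "summable (\<lambda>k. w ^ k)" using w by (intro summable_geometric) simp
  ultimately show ?thesis by (rule summable_comparison_test_ev)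
qed

lemma prime_power_series_bound:
  fixes h :: "nat \<Rightarrow> real" and x :: real
  assumes x: "0 \<le> x" "x < 1" and d: "1 \<le> d" and h0: "h 0 = 1"
    and h: "\<And>k. 1 \<le> k \<Longrightarrow> 0 \<le> h k \<and> h k \<le> C * real k ^ r"
  defines "B \<equiv> (\<Sum>k. real (Suc k) ^ r * x ^ k)"
  shows "summable (\<lambda>k. h k * x ^ (k * d))"
    and "(\<Sum>k. h k * x ^ (k * d)) \<le> 1 + C * B * x ^ d"
proof -
  have B: "summable (\<lambda>k. real (Suc k) ^ r * x ^ k)"
    using x by (rule summable_Suc_power_mult_geometric)
  have C: "0 \<le> C" using h[of 1] by simp
  have tail_le: "h (Suc k) * x ^ (Suc k * d) \<le> C * x ^ d * (real (Suc k) ^ r * x ^ k)" for k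
  proof -
    have "x ^ (k * d) \<le> x ^ k"
      using x d by (intro power_decreasing) auto
    then have "h (Suc k) * x ^ (Suc k * d) \<le> C * real (Suc k) ^ r * (x ^ d * x ^ k)"
      using h[of "Suc k"] x
      by (auto simp: power_add intro!: mult_mono mult_left_mono)
    then show ?thesis by (simp add: algebra_simps)
  qed
  have tail_summable: "summable (\<lambda>k. h (Suc k) * x ^ (Suc k * d))"
    by (rule summable_comparison_test'[OF summable_mult[OF B, of "C * x ^ d"]])
      (use tail_le h x in \<open>auto simp del: mult_Suc\<close>)
  then show summable: "summable (\<lambda>k. h k * x ^ (k * d))"
    by (subst summable_Suc_iff[symmetric])
  have "(\<Sum>k. h k * x ^ (k * d)) = 1 + (\<Sum>k. h (Suc k) * x ^ (Suc k * d))"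
    using suminf_split_head[OF summable] h0 by simp
  also have "(\<Sum>k. h (Suc k) * x ^ (Suc k * d)) \<le> (\<Sum>k. C * x ^ d * (real (Suc k) ^ r * x ^ k))"
    by (intro suminf_le tail_le tail_summable summable_mult B)
  also have "\<dots> = C * B * x ^ d"
    using suminf_mult[OF B, of "C * x ^ d"] by (simp add: B_def)
  finally show "(\<Sum>k. h k * x ^ (k * d)) \<le> 1 + C * B * x ^ d" by simp
qed

lemma infsum_UNIV_eq_suminf:
  fixes u :: "nat \<Rightarrow> 'a::banach"
  assumes "summable (\<lambda>k. norm (u k))"
  shows "infsum u UNIV = suminf u"
  using norm_summable_imp_has_sum[OF assms summable_sums[OF summable_norm_cancel[OF assms]]]
  by (rule infsumI)

lemma abs_summable_on_prod_PiE_UNIV: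
  fixes f :: "'b \<Rightarrow> nat \<Rightarrow> 'c::{real_normed_field,banach}"
  assumes Q: "finite Q" and f: "\<And>P. P \<in> Q \<Longrightarrow> summable (\<lambda>k. norm (f P k))"
  shows "(\<lambda>e. norm (\<Prod>P\<in>Q. f P (e P))) summable_on Q \<rightarrow>\<^sub>E UNIV"
proof -
  have "Infinite_Set_Sum.abs_summable_on (\<lambda>e. \<Prod>P\<in>Q. norm (f P (e P))) (Q \<rightarrow>\<^sub>E UNIV)"
    by (rule abs_summable_on_prod_PiE[OF Q]) (simp_all add: abs_summable_on_nat_iff' f)
  then show ?thesis
    by (simp add: abs_summable_equivalent[symmetric] prod_norm)
qed

lemma infsum_prod_PiE_UNIV:
  fixes f :: "'b \<Rightarrow> nat \<Rightarrow> 'c::{real_normed_field,banach}"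
  assumes Q: "finite Q" and f: "\<And>P. P \<in> Q \<Longrightarrow> summable (\<lambda>k. norm (f P k))"
  shows "infsum (\<lambda>e. \<Prod>P\<in>Q. f P (e P)) (Q \<rightarrow>\<^sub>E UNIV) = (\<Prod>P\<in>Q. \<Sum>k. f P k)"
  using Q f by (simp add: infsum_prod_PiE_abs norm_summable_imp_summable_on infsum_UNIV_eq_suminf)

lemma finite_weighted_exponents_le:
  fixes w :: "'b \<Rightarrow> nat"
  assumes Q: "finite Q" and w: "\<And>P. P \<in> Q \<Longrightarrow> 0 < w P"
  shows "finite {e \<in> Q \<rightarrow>\<^sub>E UNIV. (\<Sum>P\<in>Q. e P * w P) \<le> Y}"
proof (rule finite_subset)
  show "{e \<in> Q \<rightarrow>\<^sub>E UNIV. (\<Sum>P\<in>Q. e P * w P) \<le> Y} \<subseteq> Q \<rightarrow>\<^sub>E {..Y}"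
  proof
    fix e assume e: "e \<in> {e \<in> Q \<rightarrow>\<^sub>E UNIV. (\<Sum>P\<in>Q. e P * w P) \<le> Y}"
    have "e P \<le> Y" if P: "P \<in> Q" for P
    proof -
      have "e P \<le> e P * w P" using mult_le_mono2[of 1 "w P" "e P"] w[OF P] by simp
      also have "\<dots> \<le> (\<Sum>P\<in>Q. e P * w P)" by (rule member_le_sum) (use Q P in auto)
      finally show ?thesis using e by simp
    qed
    then show "e \<in> Q \<rightarrow>\<^sub>E {..Y}" using e by (auto simp: PiE_def)
  qed
  show "finite (Q \<rightarrow>\<^sub>E {..Y})" by (simp add: finite_PiE Q)
qed

lemma norm_infsum_le_mult_infsum:
  fixes F :: "'b \<Rightarrow> 'c::banach" and G :: "'b \<Rightarrow> real"
  assumes F: "(\<lambda>x. norm (F x)) summable_on B" and G: "G summable_on B" and "A \<subseteq> B"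
    and le: "\<And>x. x \<in> A \<Longrightarrow> norm (F x) \<le> c * G x"
    and G_nonneg: "\<And>x. x \<in> B \<Longrightarrow> 0 \<le> G x" and c: "0 \<le> c"
  shows "norm (infsum F A) \<le> c * infsum G B"
proof -
  have F_A: "(\<lambda>x. norm (F x)) summable_on A" and G_A: "G summable_on A"
    using summable_on_subset_banach[OF F \<open>A \<subseteq> B\<close>] summable_on_subset_banach[OF G \<open>A \<subseteq> B\<close>] .
  have "norm (infsum F A) \<le> infsum (\<lambda>x. norm (F x)) A"
    by (rule norm_infsum_bound[OF F_A])
  also have "\<dots> \<le> infsum (\<lambda>x. c * G x) A"
    by (rule infsum_mono[OF F_A summable_on_cmult_right[OF G_A]]) (rule le)
  also have "\<dots> \<le> c * infsum G B"
    unfolding infsum_cmult_right' using G_A G \<open>A \<subseteq> B\<close> G_nonneg c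
    by (intro mult_left_mono infsum_mono_neutral) auto
  finally show ?thesis .
qed

lemma norm_prod_le_power_mult_prod:
  fixes f :: "'b \<Rightarrow> nat \<Rightarrow> 'c::real_normed_field" and g :: "'b \<Rightarrow> nat \<Rightarrow> real"
    and w :: "'b \<Rightarrow> nat" and t :: real
  assumes t: "0 \<le> t" "t \<le> 1" and g_nonneg: "\<And>P k. P \<in> Q \<Longrightarrow> 0 \<le> g P k"
    and f_le: "\<And>P k. P \<in> Q \<Longrightarrow> norm (f P k) \<le> g P k * t ^ (k * w P)"
    and Y: "Y \<le> (\<Sum>P\<in>Q. e P * w P)"
  shows "norm (\<Prod>P\<in>Q. f P (e P)) \<le> t ^ Y * (\<Prod>P\<in>Q. g P (e P))"
proof -
  have "norm (\<Prod>P\<in>Q. f P (e P)) \<le> (\<Prod>P\<in>Q. g P (e P) * t ^ (e P * w P))"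
    unfolding prod_norm[symmetric] by (intro prod_mono) (simp add: f_le)
  also have "\<dots> = (\<Prod>P\<in>Q. g P (e P)) * t ^ (\<Sum>P\<in>Q. e P * w P)"
    by (simp add: prod.distrib power_sum)
  also have "\<dots> \<le> (\<Prod>P\<in>Q. g P (e P)) * t ^ Y"
    using Y t g_nonneg by (intro mult_left_mono power_decreasing prod_nonneg) auto
  finally show ?thesis by (simp add: mult.commute)
qed

lemma norm_truncated_euler_product_error_le:
  fixes f :: "'b \<Rightarrow> nat \<Rightarrow> 'c::{real_normed_field,banach}" and g :: "'b \<Rightarrow> nat \<Rightarrow> real"
    and w :: "'b \<Rightarrow> nat" and t :: real
  assumes Q: "finite Q" and w: "\<And>P. P \<in> Q \<Longrightarrow> 0 < w P" and t: "0 \<le> t" "t \<le> 1"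
    and g_nonneg: "\<And>P k. P \<in> Q \<Longrightarrow> 0 \<le> g P k"
    and g_summable: "\<And>P. P \<in> Q \<Longrightarrow> summable (g P)"
    and f_le: "\<And>P k. P \<in> Q \<Longrightarrow> norm (f P k) \<le> g P k * t ^ (k * w P)"
  shows "norm ((\<Sum>e | e \<in> Q \<rightarrow>\<^sub>E UNIV \<and> (\<Sum>P\<in>Q. e P * w P) \<le> Y. \<Prod>P\<in>Q. f P (e P))
              - (\<Prod>P\<in>Q. \<Sum>k. f P k))
         \<le> t ^ Y * (\<Prod>P\<in>Q. \<Sum>k. g P k)"
proof -
  define I where "I = Q \<rightarrow>\<^sub>E (UNIV :: nat set)"
  define L where "L = {e \<in> I. (\<Sum>P\<in>Q. e P * w P) \<le> Y}"
  define F where "F = (\<lambda>e. \<Prod>P\<in>Q. f P (e P))"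
  define G where "G = (\<lambda>e. \<Prod>P\<in>Q. g P (e P))"
  have f_abs: "summable (\<lambda>k. norm (f P k))" if "P \<in> Q" for P
  proof (rule summable_comparison_test'[OF g_summable[OF that]])
    fix k
    show "norm (norm (f P k)) \<le> g P k"
      using f_le[OF that, of k] mult_left_le[OF power_le_one[OF t, of "k * w P"] g_nonneg[OF that, of k]]
      by simp
  qed
  have g_abs: "summable (\<lambda>k. norm (g P k))" if "P \<in> Q" for P
    using g_summable[OF that] by (simp add: g_nonneg[OF that] abs_of_nonneg)
  have F_abs: "(\<lambda>e. norm (F e)) summable_on I"
    unfolding F_def I_def by (rule abs_summable_on_prod_PiE_UNIV[of Q f, OF Q f_abs])
  have G_abs: "(\<lambda>e. norm (G e)) summable_on I"
    unfolding G_def I_def by (rule abs_summable_on_prod_PiE_UNIV[of Q g, OF Q g_abs])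
  have F_summable: "F summable_on I" using F_abs by (rule abs_summable_summable)
  have G_summable: "G summable_on I" using G_abs by (rule abs_summable_summable)
  have G_nonneg: "0 \<le> G e" for e by (simp add: G_def g_nonneg prod_nonneg)
  have L: "finite L"
    unfolding L_def I_def by (rule finite_weighted_exponents_le[OF Q w])
  have "infsum F I = infsum F (L \<union> (I - L))"
    by (simp add: L_def Un_absorb1)
  also have "\<dots> = sum F L + infsum F (I - L)"
    using L summable_on_subset_banach[OF F_summable]
    by (subst infsum_Un_disjoint) (auto simp: L_def)
  finally have error: "sum F L - (\<Prod>P\<in>Q. \<Sum>k. f P k) = - infsum F (I - L)"
    using infsum_prod_PiE_UNIV[of Q f, OF Q f_abs] by (simp add: F_def I_def)
  have tail_le: "norm (F e) \<le> t ^ Y * G e" if "e \<in> I - L" for e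
    unfolding F_def G_def using that t g_nonneg f_le
    by (intro norm_prod_le_power_mult_prod) (auto simp: L_def)
  have "norm (infsum F (I - L)) \<le> t ^ Y * infsum G I"
    using F_abs G_summable tail_le G_nonneg t by (intro norm_infsum_le_mult_infsum) auto
  also have "infsum G I = (\<Prod>P\<in>Q. \<Sum>k. g P k)"
    unfolding G_def I_def using infsum_prod_PiE_UNIV[of Q g, OF Q g_abs] by simp
  finally show ?thesis
    using error by (simp add: L_def I_def F_def norm_minus_commute)
qed

section \<open>The smooth sum and its Euler product\<close>

lemma sum_smooth_coprime_eq_sum_exponents:
  fixes \<nu> :: "'a::{finite,field} poly \<Rightarrow> complex" and X :: nat and S :: "'a poly"
  assumes mult: "multiplicative_poly \<nu>"
  defines "Q \<equiv> {P. monic_irred P \<and> degree P \<le> X \<and> coprime P S}"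
  shows "(\<Sum>A | smooth_monic X A \<and> degree A \<le> Y \<and> coprime A S.
            \<nu> A / complex_of_real (absq A powr c))
       = (\<Sum>e | e \<in> Q \<rightarrow>\<^sub>E UNIV \<and> (\<Sum>P\<in>Q. e P * degree P) \<le> Y.
            \<Prod>P\<in>Q. \<nu> (P ^ e P) / complex_of_real (absq P powr (real (e P) * c)))"
proof -
  have Q: "finite Q"
    by (rule finite_subset[OF _ finite_degree_le[of X]]) (auto simp: Q_def)
  have QP: "\<And>P. P \<in> Q \<Longrightarrow> monic_irred P" by (simp add: Q_def)
  then have monic: "\<And>P. P \<in> Q \<Longrightarrow> monic_poly P" by (simp add: monic_irred_def)
  have "{A. smooth_monic X A \<and> degree A \<le> Y \<and> coprime A S}
      = {A \<in> {A. smooth_monic X A \<and> coprime A S}. degree A \<le> Y}" by auto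
  also have "\<dots> = {A \<in> {A. monic_poly A \<and> (\<forall>P. monic_irred P \<longrightarrow> P dvd A \<longrightarrow> P \<in> Q)}.
      degree A \<le> Y}"
    unfolding smooth_coprime_eq_monic_irred_dvd_imp_mem Q_def ..
  finally have "bij_betw (prod_powers Q) {e \<in> Q \<rightarrow>\<^sub>E UNIV. (\<Sum>P\<in>Q. e P * degree P) \<le> Y}
      {A. smooth_monic X A \<and> degree A \<le> Y \<and> coprime A S}"
    using bij_betw_Collect[OF bij_betw_prod_powers[OF Q QP], where Q = "\<lambda>A. degree A \<le> Y"]
    by (simp add: degree_prod_powers[OF monic])
  moreover have "\<nu> (prod_powers Q e) / complex_of_real (absq (prod_powers Q e) powr c)
      = (\<Prod>P\<in>Q. \<nu> (P ^ e P) / complex_of_real (absq P powr (real (e P) * c)))" for e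
  proof -
    have "absq (prod_powers Q e) powr c = (\<Prod>P\<in>Q. absq P powr (real (e P) * c))"
      using card_field_ge_2[where 'a='a]
      by (simp add: absq_powr degree_prod_powers[OF monic] sum_distrib_left powr_sum mult_ac)
    then show ?thesis
      by (simp add: multiplicative_poly_prod_powers[OF mult Q QP] prod_dividef)
  qed
  ultimately show ?thesis
    by (simp add: sum.reindex_bij_betw[symmetric])
qed

lemma norm_prime_power_term:
  fixes \<nu> :: "'a::{finite,field} poly \<Rightarrow> complex"
  defines "q \<equiv> real CARD('a)"
  shows "norm (\<nu> (P ^ k) / complex_of_real (absq P powr (real k * c)))
       = norm (\<nu> (P ^ k)) * (q powr - \<epsilon>) ^ (k * degree P) * (q powr - (c - \<epsilon>)) ^ (k * degree P)"
proof -
  have q: "0 < q" using card_field_ge_2[where 'a='a] by (simp add: q_def)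
  have "(q powr - \<epsilon>) ^ (k * degree P) * (q powr - (c - \<epsilon>)) ^ (k * degree P)
      = q powr (real (k * degree P) * - \<epsilon>) * q powr (real (k * degree P) * - (c - \<epsilon>))"
    using q by (simp add: powr_power)
  also have "\<dots> = q powr - (real (degree P) * (real k * c))"
    unfolding powr_add[symmetric] by (rule arg_cong[where f = "\<lambda>u. q powr u"]) (simp add: algebra_simps)
  also have "\<dots> = inverse (absq P powr (real k * c))"
    by (simp add: absq_powr q_def powr_minus)
  finally show ?thesis
    by (simp add: divide_inverse norm_mult norm_inverse abs_of_nonneg mult.assoc)
qed

lemma prime_power_series_summable_le:
  fixes \<nu> :: "'a::{finite,field} poly \<Rightarrow> complex"
  assumes nu1: "\<nu> 1 = 1" and P: "monic_irred P"
    and prime_powers: "\<And>k. 1 \<le> k \<Longrightarrow> norm (\<nu> (P ^ k)) \<le> C * real k ^ r"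
    and eps: "0 < \<epsilon>" "\<epsilon> < c"
  defines "x \<equiv> real CARD('a) powr - \<epsilon>"
  shows "summable (\<lambda>k. norm (\<nu> (P ^ k)) * x ^ (k * degree P))"
    and "(\<Sum>k. norm (\<nu> (P ^ k)) * x ^ (k * degree P))
           \<le> 1 + C * (\<Sum>k. real (Suc k) ^ r * x ^ k) * x ^ degree P"
    and "summable (\<lambda>k. \<nu> (P ^ k) / complex_of_real (absq P powr (real k * c)))"
proof -
  define t where "t = real CARD('a) powr - (c - \<epsilon>)"
  have q: "1 < real CARD('a)" using card_field_ge_2[where 'a='a] by simp
  have x: "0 \<le> x" "x < 1" using q eps by (auto simp: x_def intro!: powr_less_one)
  have t: "0 \<le> t" "t \<le> 1" using q eps by (auto simp: t_def intro!: less_imp_le[OF powr_less_one])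
  show g: "summable (\<lambda>k. norm (\<nu> (P ^ k)) * x ^ (k * degree P))"
    and "(\<Sum>k. norm (\<nu> (P ^ k)) * x ^ (k * degree P))
           \<le> 1 + C * (\<Sum>k. real (Suc k) ^ r * x ^ k) * x ^ degree P"
    using prime_power_series_bound[OF x, of "degree P" "\<lambda>k. norm (\<nu> (P ^ k))" C r]
      monic_irred_degree_pos[OF P] prime_powers nu1 by auto
  show "summable (\<lambda>k. \<nu> (P ^ k) / complex_of_real (absq P powr (real k * c)))"
  proof (rule summable_comparison_test'[OF g])
    fix k
    have "norm (\<nu> (P ^ k)) * x ^ (k * degree P) * t ^ (k * degree P)
        \<le> norm (\<nu> (P ^ k)) * x ^ (k * degree P)"
      using x t by (intro mult_left_le power_le_one) auto
    then show "norm (\<nu> (P ^ k) / complex_of_real (absq P powr (real k * c)))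
        \<le> norm (\<nu> (P ^ k)) * x ^ (k * degree P)"
      using norm_prime_power_term[of \<nu> P k c \<epsilon>] by (simp add: x_def t_def)
  qed
qed

lemma smooth_sum_minus_euler_product_le_prod:
  fixes \<nu> :: "'a::{finite,field} poly \<Rightarrow> complex" and X Y :: nat and S :: "'a poly"
  assumes mult: "multiplicative_poly \<nu>"
    and prime_powers: "\<And>P k. monic_irred P \<Longrightarrow> 1 \<le> k \<Longrightarrow> norm (\<nu> (P ^ k)) \<le> C * real k ^ r"
    and eps: "0 < \<epsilon>" "\<epsilon> < c"
  defines "q \<equiv> real CARD('a)"
  defines "B \<equiv> (\<Sum>k. real (Suc k) ^ r * (q powr - \<epsilon>) ^ k)"
  shows "norm ((\<Sum>A | smooth_monic X A \<and> degree A \<le> Y \<and> coprime A S.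
                  \<nu> A / complex_of_real (absq A powr c))
             - (\<Prod>P | monic_irred P \<and> degree P \<le> X \<and> coprime P S.
                  1 + (\<Sum>k. \<nu> (P ^ (k + 1)) / complex_of_real (absq P powr (real (k + 1) * c)))))
         \<le> q powr (- (c - \<epsilon>) * real Y)
             * (\<Prod>P | monic_irred P \<and> degree P \<le> X \<and> coprime P S. 1 + C * B * (q powr - \<epsilon>) ^ degree P)"
proof -
  define Q where "Q = {P. monic_irred P \<and> degree P \<le> X \<and> coprime P S}"
  define f where "f = (\<lambda>P k. \<nu> (P ^ k) / complex_of_real (absq P powr (real k * c)))"
  define x where "x = q powr - \<epsilon>"
  define t where "t = q powr - (c - \<epsilon>)"
  define g where "g = (\<lambda>P k. norm (\<nu> (P ^ k)) * x ^ (k * degree P))"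
  have q: "1 < q" using card_field_ge_2[where 'a='a] by (simp add: q_def)
  have t: "0 \<le> t" "t \<le> 1" using q eps by (auto simp: t_def intro!: less_imp_le[OF powr_less_one])
  have g_nonneg: "0 \<le> g P k" for P k using q by (simp add: g_def x_def)
  have Q: "finite Q"
    by (rule finite_subset[OF _ finite_degree_le[of X]]) (auto simp: Q_def)
  have QP: "\<And>P. P \<in> Q \<Longrightarrow> monic_irred P" by (simp add: Q_def)
  have nu1: "\<nu> 1 = 1" using mult by (simp add: multiplicative_poly_def)
  have series: "summable (g P)" "(\<Sum>k. g P k) \<le> 1 + C * B * x ^ degree P" "summable (f P)"
    if "P \<in> Q" for P
    using prime_power_series_summable_le[OF nu1 QP[OF that] prime_powers[OF QP[OF that]] eps]
    by (simp_all add: g_def f_def x_def B_def q_def)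
  have f_le: "norm (f P k) \<le> g P k * t ^ (k * degree P)" for P k
    using norm_prime_power_term[of \<nu> P k c \<epsilon>] by (simp add: f_def g_def x_def t_def q_def)
  have euler: "(\<Prod>P | monic_irred P \<and> degree P \<le> X \<and> coprime P S.
                  1 + (\<Sum>k. \<nu> (P ^ (k + 1)) / complex_of_real (absq P powr (real (k + 1) * c))))
             = (\<Prod>P\<in>Q. \<Sum>k. f P k)"
  proof (rule prod.cong)
    fix P assume "P \<in> Q"
    have "f P 0 = 1" using absq_pos[of P] by (simp add: f_def nu1)
    then show "1 + (\<Sum>k. \<nu> (P ^ (k + 1)) / complex_of_real (absq P powr (real (k + 1) * c)))
        = (\<Sum>k. f P k)"
      using suminf_split_head[OF series(3)[OF \<open>P \<in> Q\<close>]] by (simp add: f_def)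
  qed (simp add: Q_def)
  have "(\<Sum>A | smooth_monic X A \<and> degree A \<le> Y \<and> coprime A S.
           \<nu> A / complex_of_real (absq A powr c))
      = (\<Sum>e | e \<in> Q \<rightarrow>\<^sub>E UNIV \<and> (\<Sum>P\<in>Q. e P * degree P) \<le> Y. \<Prod>P\<in>Q. f P (e P))"
    unfolding Q_def f_def by (rule sum_smooth_coprime_eq_sum_exponents[OF mult])
  then have "norm ((\<Sum>A | smooth_monic X A \<and> degree A \<le> Y \<and> coprime A S.
                     \<nu> A / complex_of_real (absq A powr c))
             - (\<Prod>P | monic_irred P \<and> degree P \<le> X \<and> coprime P S.
                  1 + (\<Sum>k. \<nu> (P ^ (k + 1)) / complex_of_real (absq P powr (real (k + 1) * c)))))
      \<le> t ^ Y * (\<Prod>P\<in>Q. \<Sum>k. g P k)"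
    unfolding euler
    by (simp only:, intro norm_truncated_euler_product_error_le[OF Q _ t])
      (use monic_irred_degree_pos QP series g_nonneg f_le in auto)
  also have "\<dots> \<le> t ^ Y * (\<Prod>P\<in>Q. 1 + C * B * x ^ degree P)"
    using series g_nonneg t by (intro mult_left_mono prod_mono) (auto intro!: suminf_nonneg)
  also have "t ^ Y = q powr (- (c - \<epsilon>) * real Y)"
    using q by (simp add: t_def powr_power mult.commute)
  finally show ?thesis by (simp add: Q_def x_def)
qed

lemma prod_small_primes_le_exp:
  fixes S :: "'a::{finite,field} poly" and D \<epsilon> :: real
  assumes "0 \<le> D"
  defines "q \<equiv> real CARD('a)"
  shows "(\<Prod>P | monic_irred P \<and> degree P \<le> X \<and> coprime P S. 1 + D * (q powr - \<epsilon>) ^ degree P)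
         \<le> exp (D * real (X + 1) * q powr (real X * max 0 (1 - \<epsilon>)))"
proof -
  let ?Q = "{P. monic_irred P \<and> degree P \<le> X \<and> coprime P S}"
  have "(\<Prod>P\<in>?Q. 1 + D * (q powr - \<epsilon>) ^ degree P) \<le> exp (D * (\<Sum>P\<in>?Q. (q powr - \<epsilon>) ^ degree P))"
    using assms by (simp add: prod_le_exp_sum sum_distrib_left)
  also have "(\<Sum>P\<in>?Q. (q powr - \<epsilon>) ^ degree P) \<le> real (X + 1) * q powr (real X * max 0 (1 - \<epsilon>))"
    unfolding q_def by (rule sum_powr_degree_le) (simp add: monic_irred_def)
  finally show ?thesis
    using assms by (simp add: mult_left_mono mult.assoc)
qed

lemma smooth_sum_minus_euler_product_le:
  fixes \<nu> :: "'a::{finite,field} poly \<Rightarrow> complex" and X Y :: nat and S :: "'a poly"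
  assumes mult: "multiplicative_poly \<nu>"
    and prime_powers: "\<And>P k. monic_irred P \<Longrightarrow> 1 \<le> k \<Longrightarrow> norm (\<nu> (P ^ k)) \<le> C * real k ^ r"
    and eps: "0 < \<epsilon>" "\<epsilon> < c"
  defines "q \<equiv> real CARD('a)"
  defines "B \<equiv> (\<Sum>k. real (Suc k) ^ r * (q powr - \<epsilon>) ^ k)"
  shows "norm ((\<Sum>A | smooth_monic X A \<and> degree A \<le> Y \<and> coprime A S.
                  \<nu> A / complex_of_real (absq A powr c))
             - (\<Prod>P | monic_irred P \<and> degree P \<le> X \<and> coprime P S.
                  1 + (\<Sum>k. \<nu> (P ^ (k + 1)) / complex_of_real (absq P powr (real (k + 1) * c)))))
         \<le> q powr (- (c - \<epsilon>) * real Y)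
             * exp (C * B * real (X + 1) * q powr (real X * max 0 (1 - \<epsilon>)))"
proof -
  have "monic_irred [:0, 1 :: 'a:]"
    by (simp add: monic_irred_def monic_poly_def irreducible_linear_field_poly)
  then have "norm (\<nu> [:0, 1:]) \<le> C" using prime_powers[of "[:0, 1:]" 1] by simp
  then have C: "0 \<le> C" by (rule order_trans[OF norm_ge_zero])
  have "q powr - \<epsilon> < 1"
    using card_field_ge_2[where 'a='a] eps by (intro powr_less_one) (simp_all add: q_def)
  then have "0 \<le> B"
    unfolding B_def using summable_Suc_power_mult_geometric[of "q powr - \<epsilon>" r]
    by (intro suminf_nonneg) auto
  then have "(\<Prod>P | monic_irred P \<and> degree P \<le> X \<and> coprime P S. 1 + C * B * (q powr - \<epsilon>) ^ degree P)
      \<le> exp (C * B * real (X + 1) * q powr (real X * max 0 (1 - \<epsilon>)))"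
    unfolding q_def using C by (intro prod_small_primes_le_exp) simp
  then show ?thesis
    using smooth_sum_minus_euler_product_le_prod[of \<nu> C r \<epsilon> c X Y S, OF mult prime_powers eps]
    unfolding q_def B_def by (meson order_trans mult_left_mono powr_ge_zero)
qed

section \<open>Asymptotics in the degree of R\<close>

lemma powr_mult_le_powr_of_le_log:
  fixes q L a m x :: real
  assumes q: "1 < q" and L: "0 < L" and m: "0 \<le> m" and x: "x \<le> a * log q L"
  shows "q powr (x * m) \<le> L powr (a * m)"
proof -
  have "q powr x \<le> q powr (a * log q L)" using q x by (intro powr_mono) auto
  also have "\<dots> = (q powr log q L) powr a" by (simp add: powr_powr mult.commute)
  also have "\<dots> = L powr a" using q L by simp
  finally have "(q powr x) powr m \<le> (L powr a) powr m" using m by (intro powr_mono2) auto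
  then show ?thesis by (simp add: powr_powr)
qed

lemma eventually_log_powr_le_ln:
  fixes q a \<theta> \<kappa> D :: real
  assumes q: "1 < q" and \<theta>: "0 \<le> \<theta>" "\<theta> < 1" and \<kappa>: "0 < \<kappa>"
  shows "eventually (\<lambda>d::nat. 0 < ln (real d) \<and>
           D * (a * log q (ln (real d)) + 1) * ln (real d) powr \<theta> \<le> \<kappa> * ln (real d)) sequentially"
proof -
  have "((\<lambda>u. D * (a * log q (ln u) + 1) * ln u powr \<theta> / ln u) \<longlongrightarrow> 0) at_top"
    using q \<theta> unfolding log_def by real_asymp
  then have "eventually (\<lambda>u. D * (a * log q (ln u) + 1) * ln u powr \<theta> / ln u < \<kappa>) at_top"
    using \<kappa> by (rule order_tendstoD)
  moreover have "eventually (\<lambda>u::real. 0 < ln u) at_top" by real_asymp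
  ultimately have "eventually (\<lambda>u. 0 < ln u \<and>
      D * (a * log q (ln u) + 1) * ln u powr \<theta> \<le> \<kappa> * ln u) at_top"
    by eventually_elim (auto simp: field_simps)
  with filterlim_real_sequentially show ?thesis
    by (rule filterlim_iff[THEN iffD1, rule_format])
qed

lemma eventually_exp_le_powr:
  fixes q a \<epsilon> \<kappa> D :: real
  assumes q: "1 < q" and a: "0 < a" and \<epsilon>: "max 0 (1 - 1 / a) < \<epsilon>" and \<kappa>: "0 < \<kappa>"
  shows "eventually (\<lambda>d::nat. \<forall>X::nat. real X \<le> a * log q (ln (real d)) \<longrightarrow>
           exp (D * real (X + 1) * q powr (real X * max 0 (1 - \<epsilon>))) \<le> real d powr \<kappa>) sequentially"
proof -
  define \<theta> where "\<theta> = a * max 0 (1 - \<epsilon>)"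
  have "1 - 1 / a < \<epsilon>" using \<epsilon> by simp
  then have "a * (1 - \<epsilon>) < 1" using a by (simp add: field_simps)
  then have "0 \<le> \<theta>" "\<theta> < 1" using a by (auto simp: \<theta>_def max_def)
  from eventually_log_powr_le_ln[OF q this \<kappa>, where D = D and a = a]
  show ?thesis
  proof eventually_elim
    case (elim d)
    then have ln: "0 < ln (real d)" and bound:
      "D * (a * log q (ln (real d)) + 1) * ln (real d) powr \<theta> \<le> \<kappa> * ln (real d)" by auto
    show ?case
    proof (intro allI impI)
      fix X :: nat assume X: "real X \<le> a * log q (ln (real d))"
      have "q powr (real X * max 0 (1 - \<epsilon>)) \<le> ln (real d) powr \<theta>"
        unfolding \<theta>_def by (rule powr_mult_le_powr_of_le_log[OF q ln _ X]) simp
      then have growth: "real (X + 1) * q powr (real X * max 0 (1 - \<epsilon>))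
          \<le> (a * log q (ln (real d)) + 1) * ln (real d) powr \<theta>"
        using X by (intro mult_mono) auto
      have "D * real (X + 1) * q powr (real X * max 0 (1 - \<epsilon>)) \<le> \<kappa> * ln (real d)"
      proof (cases "0 \<le> D")
        case True
        then show ?thesis
          using mult_left_mono[OF growth True] bound by (simp add: mult.assoc)
      next
        case False
        then have "D * real (X + 1) * q powr (real X * max 0 (1 - \<epsilon>)) \<le> 0"
          by (simp add: mult_nonpos_nonneg)
        then show ?thesis using mult_pos_pos[OF \<kappa> ln] by linarith
      qed
      then show "exp (D * real (X + 1) * q powr (real X * max 0 (1 - \<epsilon>))) \<le> real d powr \<kappa>"
        using ln by (cases "d = 0") (simp_all add: powr_def)
    qed
  qed
qed

lemma powr_mult_exp_le_powr_of_log_le: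
  fixes q d b s \<delta> Y E :: real
  assumes q: "1 < q" and d: "0 < d" and s: "0 \<le> s"
    and Y: "b * log q d \<le> Y" and E: "exp E \<le> d powr (b * s * \<delta>)"
  shows "q powr (- s * Y) * exp E \<le> d powr (- (b * s * (1 - \<delta>)))"
proof -
  have "q powr (- s * Y) \<le> q powr (- s * (b * log q d))"
    using q s Y by (intro powr_mono) (auto intro: mult_left_mono)
  also have "\<dots> = (q powr log q d) powr (- b * s)" by (simp add: powr_powr mult_ac)
  also have "\<dots> = d powr (- b * s)" using q d by simp
  finally have "q powr (- s * Y) * exp E \<le> d powr (- b * s) * d powr (b * s * \<delta>)"
    using E by (intro mult_mono) auto
  also have "\<dots> = d powr (- (b * s * (1 - \<delta>)))" by (simp add: powr_add[symmetric] algebra_simps)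
  finally show ?thesis .
qed

lemma eventually_rankin_bound_le_powr:
  fixes q a b c \<epsilon> \<delta> D :: real and X y :: "nat \<Rightarrow> nat"
  assumes q: "1 < q" and a: "0 < a" and \<epsilon>: "max 0 (1 - 1 / a) < \<epsilon>"
    and b: "0 < b" and c: "\<epsilon> < c" and \<delta>: "0 < \<delta>"
    and Xy: "eventually (\<lambda>d. real (X d) \<le> a * log q (ln (real d)) \<and> b * log q (real d) \<le> real (y d))
               sequentially"
  shows "eventually (\<lambda>d. q powr (- (c - \<epsilon>) * real (y d))
             * exp (D * real (X d + 1) * q powr (real (X d) * max 0 (1 - \<epsilon>)))
           \<le> real d powr (- (b * (c - \<epsilon>) * (1 - \<delta>)))) sequentially"
proof -
  have "0 < b * (c - \<epsilon>) * \<delta>" using b c \<delta> by simp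
  from eventually_exp_le_powr[OF q a \<epsilon> this, where D = D] Xy eventually_gt_at_top[of 0]
  show ?thesis
  proof eventually_elim
    case (elim d)
    then show ?case
      using powr_mult_exp_le_powr_of_log_le[OF q, where d = "real d" and s = "c - \<epsilon>"
          and Y = "real (y d)" and E = "D * real (X d + 1) * q powr (real (X d) * max 0 (1 - \<epsilon>))"]
        c by simp
  qed
qed

theorem lemma7p12:
  fixes \<nu> :: "'a::{finite,field} poly \<Rightarrow> complex"
    and r :: nat and \<eta> a b c \<epsilon> \<delta> :: real
    and X y :: "nat \<Rightarrow> nat"
  assumes mult: "multiplicative_poly \<nu>"
    and prime_powers: "\<exists>C. \<forall>P k. monic_irred P \<longrightarrow> k \<ge> 1 \<longrightarrow>
                          norm (\<nu> (P ^ k)) \<le> C * real k ^ r"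
    and eta_pos: "\<eta> > 0"
    and growth: "\<exists>C N. \<forall>A. monic_poly A \<longrightarrow> degree A \<ge> N \<longrightarrow>
                          norm (\<nu> A) \<le> C * absq A powr \<eta>"
    and a_pos: "a > 0" and b_pos: "b > 0"
    and X_mono: "mono X" and y_mono: "mono y"
    and Xy_bounds: "\<exists>N. \<forall>d\<ge>N.
           real (X d) \<le> a * log (real CARD('a)) (ln (real d)) \<and>
           real (y d) \<ge> b * log (real CARD('a)) (real d)"
    and c_eps: "c > \<epsilon>" and eps_lower: "\<epsilon> > max 0 (1 - 1 / a)" and c_eta: "c > \<eta>"
    and delta: "0 < \<delta>" "\<delta> < 1"
  shows "\<exists>K N. \<forall>(R::'a poly) (S::'a poly). monic_poly R \<longrightarrow> monic_poly S \<longrightarrow> degree R \<ge> N \<longrightarrow>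
           norm ((\<Sum>A \<in> {A. smooth_monic (X (degree R)) A \<and> degree A \<le> y (degree R)
                               \<and> coprime A S}.
                    \<nu> A / complex_of_real (absq A powr c))
                 - (\<Prod>P \<in> {P. monic_irred P \<and> degree P \<le> X (degree R) \<and> coprime P S}.
                    1 + (\<Sum>k. \<nu> (P ^ (k + 1)) / complex_of_real (absq P powr (real (k + 1) * c)))))
           \<le> K * real (degree R) powr (- (b * (c - \<epsilon>) * (1 - \<delta>)))"
proof -
  obtain C where C: "\<And>P k. monic_irred P \<Longrightarrow> 1 \<le> k \<Longrightarrow> norm (\<nu> (P ^ k)) \<le> C * real k ^ r"
    using prime_powers by blast
  define q where "q = real CARD('a)"
  define B where "B = (\<Sum>k. real (Suc k) ^ r * (q powr - \<epsilon>) ^ k)"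
  have eps: "0 < \<epsilon>" using eps_lower by simp
  have "eventually (\<lambda>d. q powr (- (c - \<epsilon>) * real (y d))
        * exp (C * B * real (X d + 1) * q powr (real (X d) * max 0 (1 - \<epsilon>)))
      \<le> real d powr (- (b * (c - \<epsilon>) * (1 - \<delta>)))) sequentially" (is "eventually ?bound _")
    using card_field_ge_2[where 'a='a] a_pos eps_lower b_pos c_eps delta
      Xy_bounds[folded q_def eventually_sequentially]
    by (intro eventually_rankin_bound_le_powr) (simp_all add: q_def)
  then obtain N where N: "\<And>d. N \<le> d \<Longrightarrow> ?bound d"
    unfolding eventually_sequentially by blast
  show ?thesis
    by (rule exI[of _ 1], rule exI[of _ N], unfold mult_1, intro allI impI order_trans[OF
        smooth_sum_minus_euler_product_le[OF mult C eps c_eps] N[unfolded q_def B_def]])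
qed

end
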